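(* Let $p(a,b\mid x_0,x_1,y,y')$ be a non-signalling racbox. Then for every choice of inputs $x_0,x_1,y,y'\in\{0,1\}$, with probability one the outputs satisfy $$b = x_y\oplus a\oplus y' .$$ Equivalently, whenever $a\neq y'$ the box outputs $b = x_y\oplus 1$ with certainty (it acts as an "anti-RAC").
   Context: A box is a family of conditional probability distributions $p(a,b\mid x_0,x_1,y,y')$ with $a,b,x_0,x_1,y,y'\in\{0,1\}$. Alice holds inputs $x_0,x_1$ and output $a$; Bob holds inputs $y,y'$ and output $b$. A racbox is a box with two properties. First, it is non-signalling from Bob to Alice: $p(a\mid x_0,x_1,y,y')=\sum_b p(a,b\mid x_0,x_1,y,y')$ does not depend on $(y,y')$. Second, whenever $a=y'$ one has $b=x_y$, i.e. $p(a,b\mid x_0,x_1,y,y')=0$ whenever $a=y'$ and $b\neq x_y$. A racbox is non-signalling if, in addition, Bob's marginal $p(b\mid x_0,x_1,y,y')=\sum_a p(a,b\mid x_0,x_1,y,y')$ does not depend on $(x_0,x_1)$. *)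

theory Defs
  imports Complex_Main
begin

text \<open>Bits are modelled as bool (False = 0, True = 1); XOR is (\<noteq>).
  A box p a b x0 x1 y y' is p(a,b | x0,x1,y,y').\<close>

type_synonym box = "bool \<Rightarrow> bool \<Rightarrow> bool \<Rightarrow> bool \<Rightarrow> bool \<Rightarrow> bool \<Rightarrow> real"

definition sel :: "bool \<Rightarrow> bool \<Rightarrow> bool \<Rightarrow> bool" where
  "sel x0 x1 y = (if y then x1 else x0)"

definition is_box :: "box \<Rightarrow> bool" where
  "is_box p \<longleftrightarrow> (\<forall>a b x0 x1 y y'. p a b x0 x1 y y' \<ge> 0) \<and>
     (\<forall>x0 x1 y y'. (\<Sum>a\<in>UNIV. \<Sum>b\<in>UNIV. p a b x0 x1 y y') = 1)"

definition alice_marg :: "box \<Rightarrow> bool \<Rightarrow> bool \<Rightarrow> bool \<Rightarrow> bool \<Rightarrow> bool \<Rightarrow> real" where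
  "alice_marg p a x0 x1 y y' = (\<Sum>b\<in>UNIV. p a b x0 x1 y y')"

definition bob_marg :: "box \<Rightarrow> bool \<Rightarrow> bool \<Rightarrow> bool \<Rightarrow> bool \<Rightarrow> bool \<Rightarrow> real" where
  "bob_marg p b x0 x1 y y' = (\<Sum>a\<in>UNIV. p a b x0 x1 y y')"

definition racbox :: "box \<Rightarrow> bool" where
  "racbox p \<longleftrightarrow> is_box p \<and>
     (\<forall>a x0 x1 y y' z z'. alice_marg p a x0 x1 y y' = alice_marg p a x0 x1 z z') \<and>
     (\<forall>a b x0 x1 y y'. a = y' \<and> b \<noteq> sel x0 x1 y \<longrightarrow> p a b x0 x1 y y' = 0)"

definition ns_racbox :: "box \<Rightarrow> bool" where
  "ns_racbox p \<longleftrightarrow> racbox p \<and>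
     (\<forall>b x0 x1 y y' w0 w1. bob_marg p b x0 x1 y y' = bob_marg p b w0 w1 y y')"

end

theory Submission
  imports Defs
begin

text \<open>Flip both of Alice's bits: this flips Bob's target bit \<open>x\<^sub>y\<close> but, by no-signalling, not
  Bob's marginal. For \<open>y' = c\<close> the racbox condition makes Bob's probability of \<open>b = x\<^sub>y\<close> equal
  to Alice's probability of \<open>a = c\<close> plus the anti-RAC term \<open>p(\<not>c, x\<^sub>y)\<close>; at the flipped inputs
  the same probability is \<open>1\<close> minus the analogous quantity. Summing over \<open>c\<close>, Alice's
  marginals add up to \<open>1\<close> twice, so the nonnegative anti-RAC terms sum to \<open>0\<close>.\<close>

lemma is_box_nonneg:
  assumes "is_box p"
  shows "p a b x0 x1 y y' \<ge> 0"
  using assms unfolding is_box_def by (elim conjE allE) assumption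

lemma is_box_total:
  assumes "is_box p"
  shows "(\<Sum>a\<in>UNIV. \<Sum>b\<in>UNIV. p a b x0 x1 y y') = 1"
  using assms unfolding is_box_def by (elim conjE allE) assumption

lemma racbox_is_box: "racbox p \<Longrightarrow> is_box p"
  unfolding racbox_def by simp

lemma racbox_alice_no_signalling:
  assumes "racbox p"
  shows "alice_marg p a x0 x1 y y' = alice_marg p a x0 x1 z z'"
  using assms unfolding racbox_def by (elim conjE allE) assumption

lemma racbox_rac:
  assumes "racbox p" and "b \<noteq> sel x0 x1 y"
  shows "p y' b x0 x1 y y' = 0"
  using assms unfolding racbox_def by blast

lemma ns_racbox_racbox: "ns_racbox p \<Longrightarrow> racbox p"
  unfolding ns_racbox_def by simp

lemma ns_racbox_bob_no_signalling:
  assumes "ns_racbox p"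
  shows "bob_marg p b x0 x1 y y' = bob_marg p b w0 w1 y y'"
  using assms unfolding ns_racbox_def by (elim conjE allE) assumption

lemma bob_marg_complement:
  assumes "is_box p"
  shows "bob_marg p b x0 x1 y y' + bob_marg p (\<not> b) x0 x1 y y' = 1"
  using is_box_total[OF assms, of x0 x1 y y']
  unfolding bob_marg_def by (cases b) (simp_all add: UNIV_bool)

lemma racbox_alice_marg_diagonal_sum:
  assumes "racbox p"
  shows "alice_marg p True x0 x1 y True + alice_marg p False x0 x1 y False = 1"
  using racbox_alice_no_signalling[OF assms, of False x0 x1 y False y True]
    is_box_total[OF racbox_is_box[OF assms], of x0 x1 y True]
  unfolding alice_marg_def by (simp add: UNIV_bool)

lemma racbox_bob_marg_sel:
  assumes "racbox p"
  shows "bob_marg p (sel x0 x1 y) x0 x1 y c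
           = alice_marg p c x0 x1 y c + p (\<not> c) (sel x0 x1 y) x0 x1 y c"
  using racbox_rac[OF assms, of "\<not> sel x0 x1 y" x0 x1 y c]
  unfolding bob_marg_def alice_marg_def
  by (cases c; cases "sel x0 x1 y") (simp_all add: UNIV_bool)

lemma ns_racbox_anti_rac:
  assumes "ns_racbox p" and "a \<noteq> y'"
  shows "p a (sel x0 x1 y) x0 x1 y y' = 0"
proof -
  have rac: "racbox p" and box: "is_box p"
    using ns_racbox_racbox[OF assms(1)] racbox_is_box by blast+
  define s where "s = sel x0 x1 y"
  have flipped: "sel (\<not> x0) (\<not> x1) y = (\<not> s)"
    unfolding s_def sel_def by simp
  have balance: "p (\<not> c) s x0 x1 y c + p (\<not> c) (\<not> s) (\<not> x0) (\<not> x1) y c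
                   = 1 - alice_marg p c x0 x1 y c - alice_marg p c (\<not> x0) (\<not> x1) y c" for c
  proof -
    have "bob_marg p s x0 x1 y c = bob_marg p s (\<not> x0) (\<not> x1) y c"
      by (rule ns_racbox_bob_no_signalling[OF assms(1)])
    also have "\<dots> = 1 - bob_marg p (\<not> s) (\<not> x0) (\<not> x1) y c"
      using bob_marg_complement[OF box, of s "\<not> x0" "\<not> x1" y c] by simp
    finally show ?thesis
      using racbox_bob_marg_sel[OF rac, of x0 x1 y c]
        racbox_bob_marg_sel[OF rac, of "\<not> x0" "\<not> x1" y c]
      unfolding flipped s_def[symmetric] by simp
  qed
  have "p False s x0 x1 y True + p False (\<not> s) (\<not> x0) (\<not> x1) y True
      + (p True s x0 x1 y False + p True (\<not> s) (\<not> x0) (\<not> x1) y False) = 0"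
    using balance[of True] balance[of False]
      racbox_alice_marg_diagonal_sum[OF rac, of x0 x1 y]
      racbox_alice_marg_diagonal_sum[OF rac, of "\<not> x0" "\<not> x1" y]
    by simp
  then have "p (\<not> c) s x0 x1 y c = 0" for c
    using is_box_nonneg[OF box, of False s x0 x1 y True]
      is_box_nonneg[OF box, of False "\<not> s" "\<not> x0" "\<not> x1" y True]
      is_box_nonneg[OF box, of True s x0 x1 y False]
      is_box_nonneg[OF box, of True "\<not> s" "\<not> x0" "\<not> x1" y False]
    by (cases c) simp_all
  from this[of y'] show ?thesis
    using assms(2) unfolding s_def by (cases a) simp_all
qed

theorem lemma1:
  assumes "ns_racbox p"
  shows "\<forall>a b x0 x1 y y'. b \<noteq> ((sel x0 x1 y \<noteq> a) \<noteq> y') \<longrightarrow> p a b x0 x1 y y' = 0"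
proof (intro allI impI)
  fix a b x0 x1 y y'
  assume b: "b \<noteq> ((sel x0 x1 y \<noteq> a) \<noteq> y')"
  show "p a b x0 x1 y y' = 0"
  proof (cases "a = y'")
    case True
    with b have "b \<noteq> sel x0 x1 y" by auto
    with True racbox_rac[OF ns_racbox_racbox[OF assms]] show ?thesis by blast
  next
    case False
    with b have "b = sel x0 x1 y" by auto
    with ns_racbox_anti_rac[OF assms False] show ?thesis by simp
  qed
qed

end
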